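(* Define operators $(A_j)_{j\ge1}$ on $\mathcal P=\mathbb Q(b)[p_1,p_2,\dots]$ by $A_{j+1}f:=\Theta_YY_+\Lambda_Y^j\big(\frac{y_0}{1+b}f\big)$ for $j\ge0$ and $f\in\mathcal P$. Then $A_1$ is multiplication by $p_1/(1+b)$ and $A_{j+1}=[D_\alpha,A_j]$ for all $j\ge1$, as operators on $\mathcal P$.
   Context: Variables $b$, $\alpha=1+b$, $\mathbf p=(p_i)_{i\ge1}$, $\bm y=(y_i)_{i\ge0}$. Operators on polynomials in $\mathbf p,\bm y$: $\Theta_Y=\sum_{i\ge1}p_i\frac{\partial}{\partial y_i}$; $Y_+=\sum_{i\ge0}y_{i+1}\frac{\partial}{\partial y_i}$; $\Lambda_Y=(1+b)\sum_{i,j\ge1}iy_{i+j-1}\frac{\partial^2}{\partial p_i\partial y_{j-1}}+\sum_{i,j\ge1}y_{i-1}p_j\frac{\partial}{\partial y_{i+j-1}}+b\sum_{i\ge0}iy_i\frac{\partial}{\partial y_i}$. The Laplace–Beltrami operator is $D_\alpha=\frac12\Big((1+b)\sum_{i,j\ge1}ijp_{i+j}\frac{\partial^2}{\partial p_i\partial p_j}+\sum_{i,j\ge1}(i+j)p_ip_j\frac{\partial}{\partial p_{i+j}}+b\sum_{i\ge1}i(i-1)p_i\frac{\partial}{\partial p_i}\Big)$. $[A,B]=AB-BA$. *)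

theory Defs
  imports "HOL-Library.Poly_Mapping" "HOL-Computational_Algebra.Polynomial"
    "HOL-Computational_Algebra.Fraction_Field"
begin

type_synonym K = "rat poly fract"

definition bb :: K where "bb = Fract [:0, 1:] 1"

datatype var = P nat | Y nat

type_synonym mpoly = "(var \<Rightarrow>\<^sub>0 nat) \<Rightarrow>\<^sub>0 K"

definition vr :: "var \<Rightarrow> mpoly" where
  "vr v = Poly_Mapping.single (Poly_Mapping.single v 1) 1"

definition cst :: "K \<Rightarrow> mpoly" where
  "cst c = Poly_Mapping.single 0 c"

definition pd :: "var \<Rightarrow> mpoly \<Rightarrow> mpoly" where
  "pd v f = (\<Sum>m\<in>Poly_Mapping.keys f. Poly_Mapping.single (m - Poly_Mapping.single v 1)
                               (Poly_Mapping.lookup f m * of_nat (Poly_Mapping.lookup m v)))"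

definition vars :: "mpoly \<Rightarrow> var set" where
  "vars f = (\<Union>m\<in>Poly_Mapping.keys f. Poly_Mapping.keys m)"

text \<open>Indices of variables occurring in f (all other terms of the infinite sums vanish).\<close>
definition Pidx :: "mpoly \<Rightarrow> nat set" where
  "Pidx f = {i. P i \<in> vars f \<and> 1 \<le> i}"

definition Yidx :: "mpoly \<Rightarrow> nat set" where
  "Yidx f = {i. Y i \<in> vars f}"

definition ThetaY :: "mpoly \<Rightarrow> mpoly" where
  "ThetaY f = (\<Sum>i\<in>{i\<in>Yidx f. 1 \<le> i}. vr (P i) * pd (Y i) f)"

definition Yplus :: "mpoly \<Rightarrow> mpoly" where
  "Yplus f = (\<Sum>i\<in>Yidx f. vr (Y (i+1)) * pd (Y i) f)"

text \<open>Lambda_Y. In the first sum put k = j-1 (k>=0); in the second sum put n = i+j-1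
  (so j ranges over 1..n and i-1 = n-j).\<close>
definition LambdaY :: "mpoly \<Rightarrow> mpoly" where
  "LambdaY f =
     cst (1 + bb) * (\<Sum>i\<in>Pidx f. \<Sum>k\<in>Yidx f.
         cst (of_nat i) * vr (Y (i+k)) * pd (P i) (pd (Y k) f))
   + (\<Sum>n\<in>Yidx f. \<Sum>j\<in>{1..n}. vr (Y (n-j)) * vr (P j) * pd (Y n) f)
   + cst bb * (\<Sum>i\<in>Yidx f. cst (of_nat i) * vr (Y i) * pd (Y i) f)"

text \<open>Laplace-Beltrami operator D_alpha. In the second sum put n = i+j.\<close>
definition Dalpha :: "mpoly \<Rightarrow> mpoly" where
  "Dalpha f = cst (inverse 2) *
    ( cst (1 + bb) * (\<Sum>i\<in>Pidx f. \<Sum>j\<in>Pidx f.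
         cst (of_nat (i*j)) * vr (P (i+j)) * pd (P i) (pd (P j) f))
    + (\<Sum>n\<in>Pidx f. \<Sum>i\<in>{1..<n}. cst (of_nat n) * vr (P i) * vr (P (n-i)) * pd (P n) f)
    + cst bb * (\<Sum>i\<in>Pidx f. cst (of_nat (i*(i-1))) * vr (P i) * pd (P i) f))"

definition inP :: "mpoly \<Rightarrow> bool" where
  "inP f \<longleftrightarrow> vars f \<subseteq> {P i | i. 1 \<le> i}"

text \<open>A_{j+1} f = Theta_Y Y_+ Lambda_Y^j (y_0/(1+b) f), i.e. A_j uses Lambda_Y^(j-1), j>=1.\<close>
definition Aop :: "nat \<Rightarrow> mpoly \<Rightarrow> mpoly" where
  "Aop j f = ThetaY (Yplus ((LambdaY ^^ (j - 1)) (cst (inverse (1 + bb)) * vr (Y 0) * f)))"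

end

(*
  Write Phi = Theta_Y Y_+ and G_j = Lambda_Y^(j-1) (y_0 f / (1 + b)), so that A_j f = Phi G_j.
  Each G_j has degree one in the variables y, i.e. it is a sum of terms y_k h with h free of y,
  and on such a term Lambda_Y acts by  y_k h |-> sum_m y_m lambda_{k,m}(h)  with explicit
  coefficients lambda_{k,m}.  A second operator M, acting by  y_k h |-> sum_m y_m mu_{k,m}(h),
  lifts D_alpha to these polynomials and satisfies
    (1) M (y_0 h) = y_0 D_alpha h,
    (2) M Lambda_Y = Lambda_Y M,
    (3) Phi Lambda_Y + Phi M = D_alpha Phi.
  Hence A_(j+1) f = Phi (Lambda_Y G_j) = D_alpha (Phi G_j) - Phi (M G_j)
                  = D_alpha (A_j f) - Phi (Lambda_Y^(j-1) (y_0 D_alpha f / (1 + b)))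
                  = D_alpha (A_j f) - A_j (D_alpha f).
  On a generator y_k h, identities (2) and (3) are identities between the coefficients lambda
  and mu; comparing them range by range leaves exactly the commutators of D_alpha with
  multiplication by p_j and with d/dp_c, which are computed explicitly.
*)

theory Submission
  imports Defs
begin

section \<open>Finite sums over intervals\<close>

lemma Suc_choose_two: "Suc n choose 2 = n + (n choose 2)"
  by (simp add: numeral_2_eq_2)

lemma two_mult_choose_two: "2 * (n choose 2) = n * (n - 1)"
  by (induction n) (auto simp: Suc_choose_two, simp add: algebra_simps)

lemma choose_two_add: "(m + c) choose 2 = (m choose 2) + m * c + (c choose 2)"
  by (induction c) (simp_all add: Suc_choose_two)

lemma sum_atLeastLessThan_reflect: "(\<Sum>i\<in>{1..<n}. F i) = (\<Sum>i\<in>{1..<(n::nat)}. F (n - i))"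
  by (rule sum.reindex_bij_witness[of _ "\<lambda>i. n - i" "\<lambda>i. n - i"]) auto

lemma two_mult_sum_of_nat_mult_symmetric:
  fixes g :: "nat \<Rightarrow> 'a::comm_semiring_1"
  assumes "\<And>i. i \<in> {1..<n} \<Longrightarrow> g (n - i) = g i"
  shows "2 * (\<Sum>i\<in>{1..<n}. of_nat i * g i) = of_nat n * (\<Sum>i\<in>{1..<n}. g i)"
proof -
  have "(\<Sum>i\<in>{1..<n}. of_nat i * g i) = (\<Sum>i\<in>{1..<n}. of_nat (n - i) * g i)"
    by (subst sum_atLeastLessThan_reflect) (simp add: assms)
  then have "2 * (\<Sum>i\<in>{1..<n}. of_nat i * g i) = (\<Sum>i\<in>{1..<n}. (of_nat i + of_nat (n - i)) * g i)"
    by (simp only: mult_2 distrib_right sum.distrib)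
  also have "\<dots> = (\<Sum>i\<in>{1..<n}. of_nat n * g i)"
    by (rule sum.cong) (simp_all flip: of_nat_add)
  finally show ?thesis
    by (simp only: sum_distrib_left)
qed

lemma sum_greaterThanAtMost_shift: "(\<Sum>m\<in>{k<..B}. F m) = (\<Sum>i\<in>{1..B - k}. F (i + (k::nat)))"
  by (rule sum.reindex_bij_witness[of _ "\<lambda>i. i + k" "\<lambda>m. m - k"]) auto

lemma sum_atLeastAtMost_extend:
  assumes "\<And>i. C < i \<Longrightarrow> F i = 0" "C \<le> A" "C \<le> A'"
  shows "(\<Sum>i\<in>{a..A}. F i) = (\<Sum>i\<in>{a..A'::nat}. F i)"
proof -
  have "(\<Sum>i\<in>{a..A}. F i) = (\<Sum>i\<in>{a..C}. F i)"
    by (rule sum.mono_neutral_right) (use assms in auto)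
  also have "\<dots> = (\<Sum>i\<in>{a..A'}. F i)"
    by (rule sum.mono_neutral_left) (use assms in auto)
  finally show ?thesis .
qed

lemma sum_atMost_extend:
  assumes "\<And>i. C < i \<Longrightarrow> F i = 0" "C \<le> A" "C \<le> A'"
  shows "(\<Sum>i\<le>A. F i) = (\<Sum>i\<le>(A'::nat). F i)"
  using sum_atLeastAtMost_extend[of C F A A' 0] assms by (simp add: atLeast0AtMost)

lemma sum_sum_if_add_eq:
  assumes "c \<le> (N::nat)"
  shows "(\<Sum>i\<in>{1..N}. \<Sum>j\<in>{1..N}. if c = i + j then F i j else 0) = (\<Sum>i\<in>{1..<c}. F i (c - i))"
proof -
  have "(\<Sum>j\<in>{1..N}. if c = i + j then F i j else 0) = (if i < c then F i (c - i) else 0)"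
    if "i \<in> {1..N}" for i
  proof -
    have "(\<Sum>j\<in>{1..N}. if c = i + j then F i j else 0)
        = (\<Sum>j\<in>{1..N}. if j = c - i \<and> i < c then F i (c - i) else 0)"
      by (rule sum.cong) auto
    then show ?thesis
      using assms that by (cases "i < c") auto
  qed
  then have "(\<Sum>i\<in>{1..N}. \<Sum>j\<in>{1..N}. if c = i + j then F i j else 0)
      = (\<Sum>i\<in>{1..N}. if i < c then F i (c - i) else 0)"
    by (rule sum.cong[OF refl])
  also have "\<dots> = (\<Sum>i\<in>{1..N} \<inter> {i. i < c}. F i (c - i))"
    by (simp add: sum.inter_restrict)
  also have "{1..N} \<inter> {i. i < c} = {1..<c}"
    using assms by auto
  finally show ?thesis .
qed

lemma sum_if_less_eq_greaterThanAtMost: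
  "(\<Sum>n\<in>{1..N}. if c < n then F n else 0) = (\<Sum>n\<in>{c<..(N::nat)}. F n)"
proof -
  have "(\<Sum>n\<in>{1..N}. if c < n then F n else 0) = (\<Sum>n\<in>{1..N} \<inter> {n. c < n}. F n)"
    by (simp add: sum.inter_restrict)
  also have "{1..N} \<inter> {n. c < n} = {c<..N}"
    by auto
  finally show ?thesis .
qed

lemma sum_atMost_split3:
  assumes "k \<le> (B::nat)"
  shows "(\<Sum>m\<le>B. F m) = (\<Sum>m<k. F m) + F k + (\<Sum>i\<in>{1..B - k}. F (i + k))"
proof -
  have "{..B} = insert k ({..<k} \<union> {k<..B})"
    using assms by auto
  moreover have "sum F ({..<k} \<union> {k<..B}) = sum F {..<k} + sum F {k<..B}"
    by (rule sum.union_disjoint) auto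
  ultimately show ?thesis
    by (simp add: sum_greaterThanAtMost_shift algebra_simps)
qed

lemma sum_atMost_split5:
  assumes "k < m" "m \<le> (B::nat)"
  shows "(\<Sum>l\<le>B. F l) = (\<Sum>l<k. F l) + F k + (\<Sum>a\<in>{1..<m - k}. F (a + k)) + F m
    + (\<Sum>j\<in>{1..B - m}. F (j + m))"
proof -
  have "{k<..B} = insert m ({k<..<m} \<union> {m<..B})"
    using assms by auto
  moreover have "sum F ({k<..<m} \<union> {m<..B}) = sum F {k<..<m} + sum F {m<..B}"
    by (rule sum.union_disjoint) auto
  moreover have "(\<Sum>l\<in>{k<..<m}. F l) = (\<Sum>a\<in>{1..<m - k}. F (a + k))"
    by (rule sum.reindex_bij_witness[of _ "\<lambda>a. a + k" "\<lambda>l. l - k"]) auto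
  ultimately have "(\<Sum>l\<in>{k<..B}. F l) = (\<Sum>a\<in>{1..<m - k}. F (a + k)) + F m + (\<Sum>j\<in>{1..B - m}. F (j + m))"
    by (simp add: sum_greaterThanAtMost_shift algebra_simps)
  then show ?thesis
    using sum_atMost_split3[of k B F] assms by (simp add: sum_greaterThanAtMost_shift add.assoc)
qed

section \<open>Partial derivatives\<close>

lemma poly_mapping_sum_single:
  "(f :: 'a \<Rightarrow>\<^sub>0 'b::comm_monoid_add) =
     (\<Sum>m\<in>Poly_Mapping.keys f. Poly_Mapping.single m (Poly_Mapping.lookup f m))"
  by (rule poly_mapping_eqI) (simp add: lookup_sum lookup_single when_def in_keys_iff sum.delta)

lemma pd_eq_sum_superset:
  assumes "finite S" "Poly_Mapping.keys f \<subseteq> S"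
  shows "pd v f = (\<Sum>m\<in>S. Poly_Mapping.single (m - Poly_Mapping.single v 1)
                               (Poly_Mapping.lookup f m * of_nat (Poly_Mapping.lookup m v)))"
  unfolding pd_def by (rule sum.mono_neutral_left) (use assms in \<open>auto simp: in_keys_iff\<close>)

lemma pd_add: "pd v (f + g) = pd v f + pd v g"
proof -
  let ?S = "Poly_Mapping.keys f \<union> Poly_Mapping.keys g \<union> Poly_Mapping.keys (f + g)"
  let ?d = "\<lambda>h m. Poly_Mapping.single (m - Poly_Mapping.single v 1)
                   (Poly_Mapping.lookup h m * of_nat (Poly_Mapping.lookup m v))"
  have "pd v (f + g) = (\<Sum>m\<in>?S. ?d (f + g) m)"
    by (rule pd_eq_sum_superset) auto
  also have "\<dots> = (\<Sum>m\<in>?S. ?d f m) + (\<Sum>m\<in>?S. ?d g m)"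
    by (simp add: lookup_add distrib_right single_add sum.distrib)
  also have "\<dots> = pd v f + pd v g"
    by (subst (1 2) pd_eq_sum_superset[of ?S]) auto
  finally show ?thesis .
qed

lemma pd_0 [simp]: "pd v 0 = 0"
  by (simp add: pd_def)

lemma pd_sum: "pd v (\<Sum>i\<in>I. f i) = (\<Sum>i\<in>I. pd v (f i))"
  by (induction I rule: infinite_finite_induct) (auto simp: pd_add)

lemma pd_single:
  "pd v (Poly_Mapping.single a c) =
     Poly_Mapping.single (a - Poly_Mapping.single v 1) (c * of_nat (Poly_Mapping.lookup a v))"
  by (subst pd_eq_sum_superset[of "{a}"]) auto

lemma monomial_diff_single_add:
  assumes "Poly_Mapping.lookup a v > 0"
  shows "a - Poly_Mapping.single v 1 + b = a + b - Poly_Mapping.single v (1::nat)"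
  by (rule poly_mapping_eqI) (use assms in \<open>auto simp: lookup_add lookup_minus lookup_single when_def\<close>)

lemma pd_mult_single:
  "pd v (Poly_Mapping.single a c * Poly_Mapping.single b d) =
     pd v (Poly_Mapping.single a c) * Poly_Mapping.single b d
     + Poly_Mapping.single a c * pd v (Poly_Mapping.single b (d::K))"
proof -
  have "Poly_Mapping.single (a - Poly_Mapping.single v 1 + b) (c * of_nat (Poly_Mapping.lookup a v) * d)
      = Poly_Mapping.single (a + b - Poly_Mapping.single v 1) (c * d * of_nat (Poly_Mapping.lookup a v))"
    using monomial_diff_single_add[of a v b]
    by (cases "Poly_Mapping.lookup a v = 0") (auto simp: mult_ac)
  moreover have "Poly_Mapping.single (a + (b - Poly_Mapping.single v 1))
        (c * (d * of_nat (Poly_Mapping.lookup b v)))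
      = Poly_Mapping.single (a + b - Poly_Mapping.single v 1) (c * d * of_nat (Poly_Mapping.lookup b v))"
    using monomial_diff_single_add[of b v a]
    by (cases "Poly_Mapping.lookup b v = 0") (auto simp: add.commute mult_ac)
  ultimately show ?thesis
    by (simp add: mult_single pd_single lookup_add distrib_left flip: single_add)
qed

lemma pd_mult: "pd v (f * g) = pd v f * g + f * pd v (g :: mpoly)"
proof -
  let ?f = "\<lambda>m. Poly_Mapping.single m (Poly_Mapping.lookup f m)"
  let ?g = "\<lambda>m. Poly_Mapping.single m (Poly_Mapping.lookup g m)"
  have "pd v ((\<Sum>a\<in>Poly_Mapping.keys f. ?f a) * (\<Sum>b\<in>Poly_Mapping.keys g. ?g b)) =
        pd v (\<Sum>a\<in>Poly_Mapping.keys f. ?f a) * (\<Sum>b\<in>Poly_Mapping.keys g. ?g b)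
        + (\<Sum>a\<in>Poly_Mapping.keys f. ?f a) * pd v (\<Sum>b\<in>Poly_Mapping.keys g. ?g b)"
    by (simp add: sum_product pd_sum pd_mult_single sum.distrib)
  then show ?thesis
    by (simp only: poly_mapping_sum_single[symmetric])
qed

lemma pd_commute: "pd u (pd v f) = pd v (pd u f)"
proof -
  have "pd u (pd v (Poly_Mapping.single a c)) = pd v (pd u (Poly_Mapping.single a c))" for a c
  proof (cases "u = v")
    case False
    have "a - Poly_Mapping.single v 1 - Poly_Mapping.single u 1
        = a - Poly_Mapping.single u 1 - Poly_Mapping.single v (1::nat)"
      by (rule poly_mapping_eqI) (simp add: lookup_minus)
    with False show ?thesis
      by (simp add: pd_single lookup_minus lookup_single mult_ac)
  qed simp
  then show ?thesis
    by (subst (1 2) poly_mapping_sum_single) (simp add: pd_sum)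
qed

lemma cst_add: "cst (a + b) = cst a + cst b"
  by (simp add: cst_def single_add)

lemma cst_mult: "cst (a * b) = cst a * cst b"
  by (simp add: cst_def mult_single)

lemma cst_diff: "cst (a - b) = cst a - cst b"
  by (simp add: cst_def single_diff)

lemma cst_0 [simp]: "cst 0 = 0"
  by (simp add: cst_def)

lemma cst_1 [simp]: "cst 1 = 1"
  by (simp add: cst_def)

lemma cst_of_nat: "cst (of_nat n) = of_nat n"
  by (simp add: cst_def)

lemma cst_numeral: "cst (numeral n) = numeral n"
  by (simp add: cst_def)

lemma pd_vr: "pd v (vr w) = (if v = w then 1 else 0)"
  by (auto simp: vr_def pd_single lookup_single)

lemma pd_cst [simp]: "pd v (cst c) = 0"
  by (simp add: cst_def pd_single)

lemma pd_cst_mult: "pd v (cst c * f) = cst c * pd v f"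
  by (simp add: pd_mult)

lemma pd_of_nat [simp]: "pd v (of_nat n) = 0"
  by (metis cst_of_nat pd_cst)

lemma pd_numeral [simp]: "pd v (numeral n) = 0"
  by (metis cst_numeral pd_cst)

lemma pd_1 [simp]: "pd v 1 = 0"
  by (metis cst_1 pd_cst)

lemma cst_inverse_2_mult_2: "cst (inverse 2) * (2 * f) = f"
proof -
  have "cst (inverse 2) * 2 = cst (inverse 2 * 2)"
    by (simp only: cst_mult cst_numeral)
  then show ?thesis
    by (simp add: mult.assoc[symmetric])
qed

lemma two_mult_cst_inverse_2: "2 * (cst (inverse 2) * f) = f"
  by (metis cst_inverse_2_mult_2 mult.left_commute)

lemma mpoly_mult_2_cancel: "2 * f = 2 * g \<Longrightarrow> f = (g :: mpoly)"
  by (metis cst_inverse_2_mult_2)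

section \<open>Variables occurring in a polynomial\<close>

lemma finite_vars [simp]: "finite (vars f)"
  by (simp add: vars_def)

lemma vars_add: "vars (f + g) \<subseteq> vars f \<union> vars g"
  unfolding vars_def using keys_add[of f g] by auto

lemma vars_sum: "vars (\<Sum>i\<in>I. f i) \<subseteq> (\<Union>i\<in>I. vars (f i))"
  unfolding vars_def using keys_sum[of f I] by blast

lemma vars_mult: "vars (f * g) \<subseteq> vars f \<union> vars (g :: mpoly)"
proof
  fix x assume "x \<in> vars (f * g)"
  then obtain m where m: "m \<in> Poly_Mapping.keys (f * g)" "x \<in> Poly_Mapping.keys m"
    by (auto simp: vars_def)
  then obtain a b where "m = a + b" "a \<in> Poly_Mapping.keys f" "b \<in> Poly_Mapping.keys g"
    using keys_mult[of f g] by blast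
  with m keys_add[of a b] show "x \<in> vars f \<union> vars g"
    by (auto simp: vars_def)
qed

lemma vars_cst [simp]: "vars (cst c) = {}"
  by (simp add: vars_def cst_def)

lemma vars_vr [simp]: "vars (vr w) = {w}"
  by (simp add: vars_def vr_def)

lemma vars_pd: "vars (pd v f) \<subseteq> vars f"
proof
  fix x assume "x \<in> vars (pd v f)"
  then obtain m where m: "m \<in> Poly_Mapping.keys (pd v f)" "x \<in> Poly_Mapping.keys m"
    by (auto simp: vars_def)
  have "Poly_Mapping.keys (pd v f) \<subseteq> (\<lambda>a. a - Poly_Mapping.single v 1) ` Poly_Mapping.keys f"
    unfolding pd_def by (rule subset_trans[OF keys_sum]) auto
  with m(1) obtain a where "a \<in> Poly_Mapping.keys f" "m = a - Poly_Mapping.single v 1"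
    by blast
  moreover have "Poly_Mapping.keys (a - Poly_Mapping.single v 1) \<subseteq> Poly_Mapping.keys a"
    by (auto simp: in_keys_iff lookup_minus)
  ultimately show "x \<in> vars f"
    using m(2) by (auto simp: vars_def)
qed

lemma pd_eq_0_if_notin_vars: "v \<notin> vars f \<Longrightarrow> pd v f = 0"
  unfolding pd_def by (rule sum.neutral) (auto simp: vars_def in_keys_iff)

lemma finite_Pidx [simp]: "finite (Pidx f)"
proof -
  have "Pidx f \<subseteq> P -` vars f"
    unfolding Pidx_def by auto
  then show ?thesis
    using finite_vimageI[of "vars f" P] finite_subset by (auto simp: inj_def)
qed

lemma finite_Yidx [simp]: "finite (Yidx f)"
proof -
  have "Yidx f \<subseteq> Y -` vars f"
    unfolding Yidx_def by auto
  then show ?thesis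
    using finite_vimageI[of "vars f" Y] finite_subset by (auto simp: inj_def)
qed

lemma pd_P_eq_0_if_notin_Pidx: "i \<notin> Pidx f \<Longrightarrow> 1 \<le> i \<Longrightarrow> pd (P i) f = 0"
  by (rule pd_eq_0_if_notin_vars) (auto simp: Pidx_def)

lemma pd_Y_eq_0_if_notin_Yidx: "i \<notin> Yidx f \<Longrightarrow> pd (Y i) f = 0"
  by (rule pd_eq_0_if_notin_vars) (auto simp: Yidx_def)

abbreviation y :: "nat \<Rightarrow> mpoly" where "y k \<equiv> vr (Y k)"

abbreviation p :: "nat \<Rightarrow> mpoly" where "p k \<equiv> vr (P k)"

definition y_free :: "mpoly \<Rightarrow> bool" where
  "y_free h \<longleftrightarrow> (\<forall>i. Y i \<notin> vars h)"

lemma inP_imp_y_free: "inP f \<Longrightarrow> y_free f"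
  unfolding inP_def y_free_def by auto

lemma pd_Y_y_free: "y_free h \<Longrightarrow> pd (Y i) h = 0"
  by (simp add: y_free_def pd_eq_0_if_notin_vars)

lemma y_free_add: "y_free f \<Longrightarrow> y_free g \<Longrightarrow> y_free (f + g)"
  using vars_add unfolding y_free_def by blast

lemma y_free_mult: "y_free f \<Longrightarrow> y_free g \<Longrightarrow> y_free (f * g)"
  using vars_mult unfolding y_free_def by blast

lemma y_free_sum: "(\<And>i. i \<in> I \<Longrightarrow> y_free (f i)) \<Longrightarrow> y_free (\<Sum>i\<in>I. f i)"
  using vars_sum[of f I] unfolding y_free_def by blast

lemma y_free_pd: "y_free f \<Longrightarrow> y_free (pd v f)"
  using vars_pd unfolding y_free_def by blast

lemma y_free_cst [simp]: "y_free (cst c)"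
  by (simp add: y_free_def)

lemma y_free_of_nat [simp]: "y_free (of_nat n)"
  by (metis y_free_cst cst_of_nat)

lemma y_free_p [simp]: "y_free (p j)"
  by (simp add: y_free_def)

definition max_Pidx :: "mpoly \<Rightarrow> nat" where
  "max_Pidx h = Max (insert 0 (Pidx h))"

lemma Pidx_le_max_Pidx: "i \<in> Pidx f \<Longrightarrow> i \<le> max_Pidx f"
  unfolding max_Pidx_def by simp

lemma le_max_Pidx: "P i \<in> vars f \<Longrightarrow> 1 \<le> i \<Longrightarrow> i \<le> max_Pidx f"
  by (rule Pidx_le_max_Pidx) (simp add: Pidx_def)

lemma Pidx_subset_max_Pidx: "Pidx f \<subseteq> {1..max_Pidx f}"
  using Pidx_le_max_Pidx by (auto simp: Pidx_def)

lemma max_Pidx_le: "(\<And>i. i \<in> Pidx f \<Longrightarrow> i \<le> C) \<Longrightarrow> max_Pidx f \<le> C"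
  unfolding max_Pidx_def by (subst Max_le_iff) auto

lemma max_Pidx_mono: "vars f \<subseteq> vars g \<Longrightarrow> max_Pidx f \<le> max_Pidx g"
  by (rule max_Pidx_le) (auto intro!: le_max_Pidx simp: Pidx_def)

lemma pd_P_eq_0_above_max_Pidx: "max_Pidx f < i \<Longrightarrow> pd (P i) f = 0"
  using Pidx_le_max_Pidx[of i f] by (intro pd_P_eq_0_if_notin_Pidx) auto

lemma max_Pidx_add_le: "max_Pidx f \<le> C \<Longrightarrow> max_Pidx g \<le> C \<Longrightarrow> max_Pidx (f + g) \<le> C"
  using vars_add[of f g] by (intro max_Pidx_le) (fastforce simp: Pidx_def dest: le_max_Pidx)

lemma max_Pidx_mult_le: "max_Pidx f \<le> C \<Longrightarrow> max_Pidx g \<le> C \<Longrightarrow> max_Pidx (f * g) \<le> C"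
  using vars_mult[of f g] by (intro max_Pidx_le) (fastforce simp: Pidx_def dest: le_max_Pidx)

lemma max_Pidx_sum_le: "(\<And>i. i \<in> I \<Longrightarrow> max_Pidx (f i) \<le> C) \<Longrightarrow> max_Pidx (\<Sum>i\<in>I. f i) \<le> C"
  using vars_sum[of f I] by (intro max_Pidx_le) (fastforce simp: Pidx_def dest: le_max_Pidx)

lemma max_Pidx_pd_le: "max_Pidx f \<le> C \<Longrightarrow> max_Pidx (pd v f) \<le> C"
  using max_Pidx_mono[OF vars_pd, of v f] by linarith

lemma max_Pidx_cst [simp]: "max_Pidx (cst c) = 0"
  by (simp add: max_Pidx_def Pidx_def)

lemma max_Pidx_of_nat [simp]: "max_Pidx (of_nat n) = 0"
  by (metis max_Pidx_cst cst_of_nat)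

lemma max_Pidx_p_le: "j \<le> C \<Longrightarrow> max_Pidx (p j) \<le> C"
  by (rule max_Pidx_le) (simp add: Pidx_def)

section \<open>Linearity of the operators\<close>

lemma P_term_eq_0_if_notin_Pidx:
  assumes "i \<notin> Pidx f" "vars g \<subseteq> vars f" "i = 0 \<Longrightarrow> c = 0"
  shows "c * X * pd (P i) g = (0 :: mpoly)"
proof -
  have "i = 0 \<or> pd (P i) g = 0"
    using assms(1,2) by (cases "i = 0") (auto intro!: pd_eq_0_if_notin_vars simp: Pidx_def)
  then show ?thesis
    using assms(3) by auto
qed

lemma ThetaY_eq_sum_superset:
  "finite S \<Longrightarrow> Yidx f \<subseteq> S \<Longrightarrow> ThetaY f = (\<Sum>i\<in>{i\<in>S. 1 \<le> i}. p i * pd (Y i) f)"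
  unfolding ThetaY_def
  by (rule sum.mono_neutral_left) (auto, metis mult_zero_right pd_Y_eq_0_if_notin_Yidx)

lemma Yplus_eq_sum_superset:
  "finite S \<Longrightarrow> Yidx f \<subseteq> S \<Longrightarrow> Yplus f = (\<Sum>i\<in>S. y (i + 1) * pd (Y i) f)"
  unfolding Yplus_def by (rule sum.mono_neutral_left) (auto simp: pd_Y_eq_0_if_notin_Yidx)

definition LambdaY_over :: "nat set \<Rightarrow> nat set \<Rightarrow> mpoly \<Rightarrow> mpoly" where
  "LambdaY_over SP SY f =
     cst (1 + bb) * (\<Sum>i\<in>SP. \<Sum>k\<in>SY. cst (of_nat i) * y (i + k) * pd (P i) (pd (Y k) f))
   + (\<Sum>n\<in>SY. \<Sum>j\<in>{1..n}. y (n - j) * p j * pd (Y n) f)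
   + cst bb * (\<Sum>i\<in>SY. cst (of_nat i) * y i * pd (Y i) f)"

lemma LambdaY_eq_over_superset:
  assumes "finite SP" "finite SY" "Pidx f \<subseteq> SP" "Yidx f \<subseteq> SY"
  shows "LambdaY f = LambdaY_over SP SY f"
proof -
  let ?t = "\<lambda>i k. cst (of_nat i) * y (i + k) * pd (P i) (pd (Y k) f)"
  have "(\<Sum>i\<in>Pidx f. \<Sum>k\<in>Yidx f. ?t i k) = (\<Sum>i\<in>Pidx f. \<Sum>k\<in>SY. ?t i k)"
    by (intro sum.cong refl sum.mono_neutral_left) (use assms in \<open>auto simp: pd_Y_eq_0_if_notin_Yidx\<close>)
  also have "\<dots> = (\<Sum>i\<in>SP. \<Sum>k\<in>SY. ?t i k)"
    by (rule sum.mono_neutral_left)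
      (use assms in \<open>auto intro!: sum.neutral P_term_eq_0_if_notin_Pidx[of _ f] vars_pd\<close>)
  finally have "(\<Sum>i\<in>Pidx f. \<Sum>k\<in>Yidx f. ?t i k) = (\<Sum>i\<in>SP. \<Sum>k\<in>SY. ?t i k)" .
  moreover have "(\<Sum>n\<in>Yidx f. \<Sum>j\<in>{1..n}. y (n - j) * p j * pd (Y n) f)
      = (\<Sum>n\<in>SY. \<Sum>j\<in>{1..n}. y (n - j) * p j * pd (Y n) f)"
    by (rule sum.mono_neutral_left) (use assms in \<open>auto simp: pd_Y_eq_0_if_notin_Yidx\<close>)
  moreover have "(\<Sum>i\<in>Yidx f. cst (of_nat i) * y i * pd (Y i) f)
      = (\<Sum>i\<in>SY. cst (of_nat i) * y i * pd (Y i) f)"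
    by (rule sum.mono_neutral_left) (use assms in \<open>auto simp: pd_Y_eq_0_if_notin_Yidx\<close>)
  ultimately show ?thesis
    unfolding LambdaY_def LambdaY_over_def by simp
qed

definition D_join :: "nat set \<Rightarrow> mpoly \<Rightarrow> mpoly" where
  "D_join S f = (\<Sum>i\<in>S. \<Sum>j\<in>S. cst (of_nat (i * j)) * p (i + j) * pd (P i) (pd (P j) f))"

definition D_cut :: "nat set \<Rightarrow> mpoly \<Rightarrow> mpoly" where
  "D_cut S f = (\<Sum>n\<in>S. \<Sum>i\<in>{1..<n}. cst (of_nat n) * p i * p (n - i) * pd (P n) f)"

definition D_deg :: "nat set \<Rightarrow> mpoly \<Rightarrow> mpoly" where
  "D_deg S f = (\<Sum>i\<in>S. cst (of_nat (i * (i - 1))) * p i * pd (P i) f)"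

definition Dalpha_over :: "nat set \<Rightarrow> mpoly \<Rightarrow> mpoly" where
  "Dalpha_over S f = cst (inverse 2) * (cst (1 + bb) * D_join S f + D_cut S f + cst bb * D_deg S f)"

lemma Dalpha_eq_over_superset:
  assumes "finite S" "Pidx f \<subseteq> S"
  shows "Dalpha f = Dalpha_over S f"
proof -
  let ?t = "\<lambda>i j. cst (of_nat (i * j)) * p (i + j) * pd (P i) (pd (P j) f)"
  have "(\<Sum>i\<in>Pidx f. \<Sum>j\<in>Pidx f. ?t i j) = (\<Sum>i\<in>Pidx f. \<Sum>j\<in>S. ?t i j)"
  proof (rule sum.cong[OF refl], rule sum.mono_neutral_left)
    fix i show "\<forall>j\<in>S - Pidx f. ?t i j = 0"
      by (auto simp: pd_commute[of "P i"] intro!: P_term_eq_0_if_notin_Pidx[of _ f] vars_pd)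
  qed (use assms in auto)
  also have "\<dots> = (\<Sum>i\<in>S. \<Sum>j\<in>S. ?t i j)"
    by (rule sum.mono_neutral_left)
      (use assms in \<open>auto intro!: sum.neutral P_term_eq_0_if_notin_Pidx[of _ f] vars_pd\<close>)
  finally have "(\<Sum>i\<in>Pidx f. \<Sum>j\<in>Pidx f. ?t i j) = (\<Sum>i\<in>S. \<Sum>j\<in>S. ?t i j)" .
  moreover have "(\<Sum>n\<in>Pidx f. \<Sum>i\<in>{1..<n}. cst (of_nat n) * p i * p (n - i) * pd (P n) f)
      = (\<Sum>n\<in>S. \<Sum>i\<in>{1..<n}. cst (of_nat n) * p i * p (n - i) * pd (P n) f)"
    by (rule sum.mono_neutral_left)
      (use assms in \<open>auto intro!: sum.neutral P_term_eq_0_if_notin_Pidx[of _ f]\<close>)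
  moreover have "(\<Sum>i\<in>Pidx f. cst (of_nat (i * (i - 1))) * p i * pd (P i) f)
      = (\<Sum>i\<in>S. cst (of_nat (i * (i - 1))) * p i * pd (P i) f)"
    by (rule sum.mono_neutral_left) (use assms in \<open>auto intro!: P_term_eq_0_if_notin_Pidx[of _ f]\<close>)
  ultimately show ?thesis
    unfolding Dalpha_def Dalpha_over_def D_join_def D_cut_def D_deg_def by simp
qed

lemma Dalpha_eq_over_atLeastAtMost: "max_Pidx h \<le> N \<Longrightarrow> Dalpha h = Dalpha_over {1..N} h"
  by (rule Dalpha_eq_over_superset) (use Pidx_subset_max_Pidx[of h] in auto)

lemma ThetaY_add: "ThetaY (f + g) = ThetaY f + ThetaY g"
  by (subst (1 2 3) ThetaY_eq_sum_superset[of "Yidx f \<union> Yidx g \<union> Yidx (f + g)"])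
    (auto simp: pd_add distrib_left sum.distrib)

lemma Yplus_add: "Yplus (f + g) = Yplus f + Yplus g"
  by (subst (1 2 3) Yplus_eq_sum_superset[of "Yidx f \<union> Yidx g \<union> Yidx (f + g)"])
    (auto simp: pd_add distrib_left sum.distrib)

lemma LambdaY_add: "LambdaY (f + g) = LambdaY f + LambdaY g"
  by (subst (1 2 3) LambdaY_eq_over_superset[of "Pidx f \<union> Pidx g \<union> Pidx (f + g)"
        "Yidx f \<union> Yidx g \<union> Yidx (f + g)"])
    (auto simp: LambdaY_over_def pd_add distrib_left sum.distrib algebra_simps)

lemma Dalpha_add: "Dalpha (f + g) = Dalpha f + Dalpha g"
  by (subst (1 2 3) Dalpha_eq_over_superset[of "Pidx f \<union> Pidx g \<union> Pidx (f + g)"])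
    (auto simp: Dalpha_over_def D_join_def D_cut_def D_deg_def pd_add distrib_left sum.distrib
      algebra_simps)

lemma Dalpha_cst_mult: "Dalpha (cst c * f) = cst c * Dalpha f"
proof -
  have "Dalpha_over S (cst c * f) = cst c * Dalpha_over S f" for S
    unfolding Dalpha_over_def D_join_def D_cut_def D_deg_def pd_cst_mult
    by (simp add: sum_distrib_left algebra_simps)
  then show ?thesis
    by (subst (1 2) Dalpha_eq_over_superset[of "Pidx f \<union> Pidx (cst c * f)"]) auto
qed

lemma ThetaY_0 [simp]: "ThetaY 0 = 0"
  by (metis ThetaY_add add_cancel_right_right)

lemma Yplus_0 [simp]: "Yplus 0 = 0"
  by (metis Yplus_add add_cancel_right_right)

lemma LambdaY_0 [simp]: "LambdaY 0 = 0"
  by (metis LambdaY_add add_cancel_right_right)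

lemma Dalpha_0 [simp]: "Dalpha 0 = 0"
  by (metis Dalpha_add add_cancel_right_right)

lemma ThetaY_sum: "ThetaY (\<Sum>i\<in>I. f i) = (\<Sum>i\<in>I. ThetaY (f i))"
  by (induction I rule: infinite_finite_induct) (auto simp: ThetaY_add)

lemma Yplus_sum: "Yplus (\<Sum>i\<in>I. f i) = (\<Sum>i\<in>I. Yplus (f i))"
  by (induction I rule: infinite_finite_induct) (auto simp: Yplus_add)

lemma y_free_Dalpha: "y_free f \<Longrightarrow> y_free (Dalpha f)"
  unfolding Dalpha_eq_over_superset[OF finite_Pidx order.refl] Dalpha_over_def
    D_join_def D_cut_def D_deg_def
  by (intro y_free_add y_free_mult y_free_sum y_free_pd y_free_cst y_free_p; assumption?)+

lemma max_Pidx_Dalpha_le: "max_Pidx (Dalpha f) \<le> 2 * max_Pidx f"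
  unfolding Dalpha_eq_over_atLeastAtMost[OF order.refl] Dalpha_over_def
    D_join_def D_cut_def D_deg_def
  by (intro max_Pidx_add_le max_Pidx_mult_le max_Pidx_sum_le max_Pidx_p_le max_Pidx_pd_le order.refl)
    (auto simp: max_Pidx_cst)

section \<open>Commutators of \<^const>\<open>Dalpha\<close> with \<open>p\<^sub>j\<close> and with \<open>\<partial>/\<partial>p\<^sub>c\<close>\<close>

lemma pd_P_mult_p: "pd (P i) (p j * h) = p j * pd (P i) h + (if i = j then h else 0)"
  by (simp add: pd_mult pd_vr)

lemma D_join_mult_p:
  assumes "finite S" "j \<in> S"
  shows "D_join S (p j * h) =
    p j * D_join S h + 2 * (\<Sum>i\<in>S. cst (of_nat (i * j)) * p (i + j) * pd (P i) h)"
proof -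
  let ?t = "\<lambda>i i'. cst (of_nat (i * i')) * p (i + i')"
  have "?t i i' * pd (P i) (pd (P i') (p j * h)) = p j * (?t i i' * pd (P i) (pd (P i') h))
      + (if i' = j then ?t i j * pd (P i) h else 0) + (if i = j then ?t i' j * pd (P i') h else 0)"
    for i i'
    by (simp add: pd_mult pd_vr pd_add algebra_simps)
  then have "D_join S (p j * h) = p j * D_join S h
      + (\<Sum>i\<in>S. \<Sum>i'\<in>S. if i' = j then ?t i j * pd (P i) h else 0)
      + (\<Sum>i\<in>S. \<Sum>i'\<in>S. if i = j then ?t i' j * pd (P i') h else 0)"
    unfolding D_join_def by (simp only: sum.distrib sum_distrib_left)
  also have "(\<Sum>i\<in>S. \<Sum>i'\<in>S. if i = j then ?t i' j * pd (P i') h else 0)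
      = (\<Sum>i\<in>S. \<Sum>i'\<in>S. if i' = j then ?t i j * pd (P i) h else 0)"
    by (rule sum.swap)
  also have "(\<Sum>i\<in>S. \<Sum>i'\<in>S. if i' = j then ?t i j * pd (P i) h else 0)
      = (\<Sum>i\<in>S. ?t i j * pd (P i) h)"
    using assms by simp
  finally show ?thesis
    by (simp only: mult_2 add.assoc)
qed

lemma D_cut_mult_p:
  assumes "finite S" "j \<in> S"
  shows "D_cut S (p j * h) = p j * D_cut S h + cst (of_nat j) * (\<Sum>i\<in>{1..<j}. p i * p (j - i)) * h"
proof -
  let ?t = "\<lambda>n i. cst (of_nat n) * p i * p (n - i)"
  have "(\<Sum>i\<in>{1..<n}. ?t n i * pd (P n) (p j * h))
      = p j * (\<Sum>i\<in>{1..<n}. ?t n i * pd (P n) h) + (if n = j then (\<Sum>i\<in>{1..<n}. ?t n i) * h else 0)"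
    for n
    unfolding pd_P_mult_p
    by (cases "n = j") (simp_all add: algebra_simps sum.distrib sum_distrib_left sum_distrib_right)
  then have "D_cut S (p j * h) = p j * D_cut S h + (\<Sum>n\<in>S. if n = j then (\<Sum>i\<in>{1..<n}. ?t n i) * h else 0)"
    unfolding D_cut_def by (simp only: sum.distrib sum_distrib_left)
  then show ?thesis
    using assms by (simp add: sum_distrib_left sum_distrib_right mult.assoc)
qed

lemma D_deg_mult_p:
  assumes "finite S" "j \<in> S"
  shows "D_deg S (p j * h) = p j * D_deg S h + cst (of_nat (j * (j - 1))) * p j * h"
proof -
  let ?t = "\<lambda>i. cst (of_nat (i * (i - 1))) * p i"
  have "?t i * pd (P i) (p j * h) = p j * (?t i * pd (P i) h) + (if i = j then ?t i * h else 0)" for i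
    unfolding pd_P_mult_p by (simp add: algebra_simps)
  then have "D_deg S (p j * h) = p j * D_deg S h + (\<Sum>i\<in>S. if i = j then ?t i * h else 0)"
    unfolding D_deg_def by (simp only: sum.distrib sum_distrib_left)
  then show ?thesis
    using assms by simp
qed

lemma two_mult_Dalpha_over:
  "2 * Dalpha_over S f = cst (1 + bb) * D_join S f + D_cut S f + cst bb * D_deg S f"
  unfolding Dalpha_over_def by (rule two_mult_cst_inverse_2)

lemma Dalpha_mult_p:
  assumes "1 \<le> j"
  shows "Dalpha (p j * h) = p j * Dalpha h
    + cst (1 + bb) * of_nat j * (\<Sum>i\<in>{1..max_Pidx h}. of_nat i * p (i + j) * pd (P i) h)
    + (\<Sum>i\<in>{1..<j}. of_nat i * (p i * p (j - i))) * h
    + cst (bb * of_nat (j choose 2)) * p j * h"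
proof (rule mpoly_mult_2_cancel)
  define N where "N = j + max_Pidx h"
  have jN: "j \<in> {1..N}"
    using assms by (simp add: N_def)
  have D_ph: "Dalpha (p j * h) = Dalpha_over {1..N} (p j * h)"
    by (intro Dalpha_eq_over_atLeastAtMost max_Pidx_mult_le max_Pidx_p_le) (simp_all add: N_def)
  have D_h: "Dalpha h = Dalpha_over {1..N} h"
    by (rule Dalpha_eq_over_atLeastAtMost) (simp add: N_def)
  have "(\<Sum>i\<in>{1..N}. cst (of_nat (i * j)) * p (i + j) * pd (P i) h)
      = (\<Sum>i\<in>{1..N}. of_nat j * (of_nat i * p (i + j) * pd (P i) h))"
    by (simp add: cst_mult cst_of_nat algebra_simps)
  also have "\<dots> = (\<Sum>i\<in>{1..max_Pidx h}. of_nat j * (of_nat i * p (i + j) * pd (P i) h))"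
    by (rule sum_atLeastAtMost_extend[of "max_Pidx h"]) (auto simp: N_def pd_P_eq_0_above_max_Pidx)
  finally have join: "(\<Sum>i\<in>{1..N}. cst (of_nat (i * j)) * p (i + j) * pd (P i) h)
      = of_nat j * (\<Sum>i\<in>{1..max_Pidx h}. of_nat i * p (i + j) * pd (P i) h)"
    by (simp only: sum_distrib_left)
  have cut: "cst (of_nat j) * (\<Sum>i\<in>{1..<j}. p i * p (j - i))
      = 2 * (\<Sum>i\<in>{1..<j}. of_nat i * (p i * p (j - i)))"
    unfolding cst_of_nat
    by (rule two_mult_sum_of_nat_mult_symmetric[symmetric]) (auto simp: mult.commute)
  have deg: "cst (of_nat (j * (j - 1))) = 2 * cst (of_nat (j choose 2))"
    by (simp only: cst_of_nat cst_mult cst_numeral of_nat_mult of_nat_numeral flip: two_mult_choose_two)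
  have pj: "2 * (p j * Dalpha h)
      = p j * (cst (1 + bb) * D_join {1..N} h + D_cut {1..N} h + cst bb * D_deg {1..N} h)"
    unfolding D_h two_mult_Dalpha_over[symmetric] by (rule mult.left_commute)
  show "2 * Dalpha (p j * h) = 2 * (p j * Dalpha h
    + cst (1 + bb) * of_nat j * (\<Sum>i\<in>{1..max_Pidx h}. of_nat i * p (i + j) * pd (P i) h)
    + (\<Sum>i\<in>{1..<j}. of_nat i * (p i * p (j - i))) * h
    + cst (bb * of_nat (j choose 2)) * p j * h)"
    unfolding distrib_left[of 2] pj D_ph two_mult_Dalpha_over D_join_mult_p[OF finite_atLeastAtMost jN]
      D_cut_mult_p[OF finite_atLeastAtMost jN] D_deg_mult_p[OF finite_atLeastAtMost jN] join cut deg
    by (simp add: algebra_simps cst_mult)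
qed

lemma pd_P_D_join:
  assumes "c \<le> N"
  shows "pd (P c) (D_join {1..N} h) = D_join {1..N} (pd (P c) h)
    + (\<Sum>i\<in>{1..<c}. cst (of_nat (i * (c - i))) * pd (P i) (pd (P (c - i)) h))"
proof -
  let ?t = "\<lambda>i j. cst (of_nat (i * j))"
  have "pd (P c) (?t i j * p (i + j) * pd (P i) (pd (P j) h))
      = ?t i j * p (i + j) * pd (P i) (pd (P j) (pd (P c) h))
        + (if c = i + j then ?t i j * pd (P i) (pd (P j) h) else 0)" for i j
  proof -
    have "pd (P c) (pd (P i) (pd (P j) h)) = pd (P i) (pd (P j) (pd (P c) h))"
      by (metis pd_commute)
    then show ?thesis
      by (simp add: pd_mult pd_vr)
  qed
  then have "pd (P c) (D_join {1..N} h) = D_join {1..N} (pd (P c) h)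
      + (\<Sum>i\<in>{1..N}. \<Sum>j\<in>{1..N}. if c = i + j then ?t i j * pd (P i) (pd (P j) h) else 0)"
    unfolding D_join_def pd_sum by (simp only: sum.distrib)
  then show ?thesis
    by (simp only: sum_sum_if_add_eq[OF assms])
qed

lemma pd_P_D_cut:
  assumes "1 \<le> c" "c \<le> N"
  shows "pd (P c) (D_cut {1..N} h) = D_cut {1..N} (pd (P c) h)
    + 2 * (\<Sum>n\<in>{c<..N}. cst (of_nat n) * p (n - c) * pd (P n) h)"
proof -
  let ?t = "\<lambda>n i. cst (of_nat n) * p i * pd (P n) h"
  have "pd (P c) (cst (of_nat n) * p i * p (n - i) * pd (P n) h)
      = cst (of_nat n) * p i * p (n - i) * pd (P n) (pd (P c) h)
        + (if c = i then ?t n (n - i) else 0) + (if c = n - i then ?t n i else 0)" for n i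
    by (simp add: pd_mult pd_vr pd_commute[of "P c"] algebra_simps)
  then have "pd (P c) (D_cut {1..N} h) = D_cut {1..N} (pd (P c) h)
      + (\<Sum>n\<in>{1..N}. \<Sum>i\<in>{1..<n}. if c = i then ?t n (n - i) else 0)
      + (\<Sum>n\<in>{1..N}. \<Sum>i\<in>{1..<n}. if c = n - i then ?t n i else 0)"
    unfolding D_cut_def pd_sum by (simp only: sum.distrib)
  moreover have "(\<Sum>i\<in>{1..<n}. if c = i then ?t n (n - i) else 0) = (if c < n then ?t n (n - c) else 0)"
    for n using assms by auto
  moreover have "(\<Sum>i\<in>{1..<n}. if c = n - i then ?t n i else 0) = (if c < n then ?t n (n - c) else 0)"
    for n
  proof -
    have "(\<Sum>i\<in>{1..<n}. if c = n - i then ?t n i else 0)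
        = (\<Sum>i\<in>{1..<n}. if i = n - c \<and> c < n then ?t n (n - c) else 0)"
      by (rule sum.cong) (use assms in auto)
    then show ?thesis
      using assms by auto
  qed
  ultimately show ?thesis
    by (simp only: sum_if_less_eq_greaterThanAtMost mult_2 add.assoc)
qed

lemma pd_P_D_deg:
  assumes "c \<in> {1..N}"
  shows "pd (P c) (D_deg {1..N} h) = D_deg {1..N} (pd (P c) h) + cst (of_nat (c * (c - 1))) * pd (P c) h"
proof -
  let ?t = "\<lambda>i. cst (of_nat (i * (i - 1)))"
  have "pd (P c) (?t i * p i * pd (P i) h)
      = ?t i * p i * pd (P i) (pd (P c) h) + (if c = i then ?t i * pd (P i) h else 0)" for i
    by (simp add: pd_mult pd_vr pd_commute[of "P c"])
  then have "pd (P c) (D_deg {1..N} h) = D_deg {1..N} (pd (P c) h)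
      + (\<Sum>i\<in>{1..N}. if c = i then ?t i * pd (P i) h else 0)"
    unfolding D_deg_def pd_sum by (simp only: sum.distrib)
  then show ?thesis
    using assms by simp
qed

lemma pd_P_Dalpha:
  assumes "1 \<le> c"
  shows "pd (P c) (Dalpha h) = Dalpha (pd (P c) h)
    + cst (inverse 2) * (cst (1 + bb) * (\<Sum>i\<in>{1..<c}. of_nat (i * (c - i)) * pd (P i) (pd (P (c - i)) h)))
    + (\<Sum>j\<in>{1..max_Pidx h}. of_nat (j + c) * p j * pd (P (j + c)) h)
    + cst (bb * of_nat (c choose 2)) * pd (P c) h"
proof (rule mpoly_mult_2_cancel)
  define N where "N = c + max_Pidx h"
  have cN: "c \<in> {1..N}" and "c \<le> N"
    using assms by (simp_all add: N_def)
  have D_h: "2 * Dalpha h = cst (1 + bb) * D_join {1..N} h + D_cut {1..N} h + cst bb * D_deg {1..N} h"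
    by (simp only: Dalpha_eq_over_atLeastAtMost[of h N] N_def le_add2 two_mult_Dalpha_over)
  have D_pd: "2 * Dalpha (pd (P c) h) = cst (1 + bb) * D_join {1..N} (pd (P c) h)
      + D_cut {1..N} (pd (P c) h) + cst bb * D_deg {1..N} (pd (P c) h)"
    by (simp only: Dalpha_eq_over_atLeastAtMost[of "pd (P c) h" N] max_Pidx_pd_le N_def le_add2
        two_mult_Dalpha_over)
  have join: "(\<Sum>i\<in>{1..<c}. cst (of_nat (i * (c - i))) * pd (P i) (pd (P (c - i)) h))
      = (\<Sum>i\<in>{1..<c}. of_nat (i * (c - i)) * pd (P i) (pd (P (c - i)) h))"
    by (simp only: cst_of_nat)
  have cut: "(\<Sum>n\<in>{c<..N}. cst (of_nat n) * p (n - c) * pd (P n) h)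
      = (\<Sum>j\<in>{1..max_Pidx h}. of_nat (j + c) * p j * pd (P (j + c)) h)"
    by (simp add: sum_greaterThanAtMost_shift N_def cst_of_nat)
  have deg: "cst (of_nat (c * (c - 1))) = 2 * cst (of_nat (c choose 2))"
    by (simp only: cst_of_nat cst_mult cst_numeral of_nat_mult of_nat_numeral flip: two_mult_choose_two)
  have "2 * pd (P c) (Dalpha h) = pd (P c) (2 * Dalpha h)"
    by (simp add: pd_mult)
  then show "2 * pd (P c) (Dalpha h) = 2 * (Dalpha (pd (P c) h)
    + cst (inverse 2) * (cst (1 + bb) * (\<Sum>i\<in>{1..<c}. of_nat (i * (c - i)) * pd (P i) (pd (P (c - i)) h)))
    + (\<Sum>j\<in>{1..max_Pidx h}. of_nat (j + c) * p j * pd (P (j + c)) h)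
    + cst (bb * of_nat (c choose 2)) * pd (P c) h)"
    unfolding distrib_left[of 2] D_h D_pd two_mult_cst_inverse_2 pd_add pd_cst_mult
      pd_P_D_join[OF \<open>c \<le> N\<close>] pd_P_D_cut[OF assms \<open>c \<le> N\<close>] pd_P_D_deg[OF cN] join cut deg
    by (simp add: algebra_simps cst_mult)
qed

section \<open>The operators on generators \<open>y\<^sub>k h\<close>\<close>

lemma pd_Y_y_mult: "y_free h \<Longrightarrow> pd (Y k') (y k * h) = (if k' = k then h else 0)"
  by (simp add: pd_mult pd_vr pd_Y_y_free)

lemma pd_P_y_mult: "pd (P i) (y k * h) = y k * pd (P i) h"
  by (simp add: pd_mult pd_vr)

lemma Yidx_y_mult: "y_free h \<Longrightarrow> Yidx (y k * h) \<subseteq> {k}"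
  using vars_mult[of "y k" h] unfolding Yidx_def y_free_def by auto

lemma Pidx_y_mult: "Pidx (y k * h) \<subseteq> Pidx h"
  using vars_mult[of "y k" h] unfolding Pidx_def by auto

lemma max_Pidx_y_mult: "max_Pidx (y k * h) \<le> max_Pidx h"
  using Pidx_y_mult by (intro max_Pidx_le) (auto intro: Pidx_le_max_Pidx)

lemma ThetaY_Yplus_y_mult: "y_free h \<Longrightarrow> ThetaY (Yplus (y k * h)) = p (k + 1) * h"
proof -
  assume h: "y_free h"
  have "Yplus (y k * h) = (\<Sum>i\<in>{k}. y (i + 1) * pd (Y i) (y k * h))"
    by (rule Yplus_eq_sum_superset) (use Yidx_y_mult[OF h] in auto)
  then have "Yplus (y k * h) = y (k + 1) * h"
    by (simp add: pd_Y_y_mult h)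
  moreover have "ThetaY (y (k + 1) * h) = (\<Sum>i\<in>{i\<in>{k + 1}. 1 \<le> i}. p i * pd (Y i) (y (k + 1) * h))"
    by (rule ThetaY_eq_sum_superset) (use Yidx_y_mult[OF h] in auto)
  moreover have "{i\<in>{k + 1}. 1 \<le> i} = {k + 1}"
    by auto
  ultimately show ?thesis
    by (simp add: pd_Y_y_mult h)
qed

definition lambda_coeff :: "nat \<Rightarrow> nat \<Rightarrow> mpoly \<Rightarrow> mpoly" where
  "lambda_coeff k m h =
    (if k < m then cst ((1 + bb) * of_nat (m - k)) * pd (P (m - k)) h
     else if m < k then p (k - m) * h
     else cst (bb * of_nat k) * h)"

lemma lambda_coeff_eq_0: "k + max_Pidx h < m \<Longrightarrow> lambda_coeff k m h = 0"
  by (simp add: lambda_coeff_def pd_P_eq_0_above_max_Pidx)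

lemma lambda_coeff_0 [simp]: "lambda_coeff k m 0 = 0"
  by (simp add: lambda_coeff_def)

lemma LambdaY_y_mult:
  assumes h: "y_free h" and B: "k + max_Pidx h \<le> B"
  shows "LambdaY (y k * h) = (\<Sum>m\<le>B. y m * lambda_coeff k m h)"
proof -
  have "LambdaY (y k * h) = LambdaY_over {1..max_Pidx h} {k} (y k * h)"
    by (rule LambdaY_eq_over_superset)
      (use Yidx_y_mult[OF h] Pidx_y_mult[of k h] Pidx_subset_max_Pidx[of h] in auto)
  also have "\<dots> = cst (1 + bb) * (\<Sum>i\<in>{1..max_Pidx h}. cst (of_nat i) * y (i + k) * pd (P i) h)
      + (\<Sum>j\<in>{1..k}. y (k - j) * p j * h) + cst bb * (cst (of_nat k) * y k * h)"
    by (simp add: LambdaY_over_def pd_Y_y_mult pd_P_y_mult h pd_mult pd_vr pd_Y_y_free mult_ac)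
  also have "(\<Sum>i\<in>{1..max_Pidx h}. cst (of_nat i) * y (i + k) * pd (P i) h)
      = (\<Sum>i\<in>{1..B - k}. cst (of_nat i) * y (i + k) * pd (P i) h)"
    by (rule sum_atLeastAtMost_extend[of "max_Pidx h"]) (use B in \<open>auto simp: pd_P_eq_0_above_max_Pidx\<close>)
  also have "cst (1 + bb) * \<dots> = (\<Sum>i\<in>{1..B - k}. y (i + k) * lambda_coeff k (i + k) h)"
    by (simp add: sum_distrib_left lambda_coeff_def cst_mult mult_ac)
  also have "(\<Sum>j\<in>{1..k}. y (k - j) * p j * h) = (\<Sum>m<k. y m * lambda_coeff k m h)"
    by (rule sum.reindex_bij_witness[of _ "\<lambda>m. k - m" "\<lambda>j. k - j"]) (auto simp: lambda_coeff_def mult_ac)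
  also have "cst bb * (cst (of_nat k) * y k * h) = y k * lambda_coeff k k h"
    by (simp add: lambda_coeff_def cst_mult mult_ac)
  finally show ?thesis
    using sum_atMost_split3[of k B "\<lambda>m. y m * lambda_coeff k m h"] B by (simp add: algebra_simps)
qed

definition mu_coeff :: "nat \<Rightarrow> nat \<Rightarrow> mpoly \<Rightarrow> mpoly" where
  "mu_coeff k m h =
    (if k < m then cst ((1 + bb) * of_nat k * of_nat (m - k)) * pd (P (m - k)) h
     else if m < k then of_nat m * p (k - m) * h
     else Dalpha h + cst (bb * of_nat (k choose 2)) * h)"

lemma mu_coeff_eq_0: "k + max_Pidx h < m \<Longrightarrow> mu_coeff k m h = 0"
  by (simp add: mu_coeff_def pd_P_eq_0_above_max_Pidx)

lemma mu_coeff_add: "mu_coeff k m (f + g) = mu_coeff k m f + mu_coeff k m g"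
  by (simp add: mu_coeff_def pd_add Dalpha_add algebra_simps)

lemma mu_coeff_0 [simp]: "mu_coeff k m 0 = 0"
  by (simp add: mu_coeff_def)

(*
  On polynomials of degree one in y, Mlift is the differential operator
    D_alpha + (1 + b) sum_{i,k} i k y_(i+k) d/dp_i d/dy_k + sum_{m<k} m y_m p_(k-m) d/dy_k
            + b sum_k (k choose 2) y_k d/dy_k,
  given here through its coefficients mu_coeff; the bound on m only omits vanishing terms
  (mu_coeff_eq_0).
*)
definition Mlift :: "mpoly \<Rightarrow> mpoly" where
  "Mlift G = (\<Sum>k\<in>Yidx G. \<Sum>m\<le>Max (insert 0 (Yidx G)) + max_Pidx G. y m * mu_coeff k m (pd (Y k) G))"

lemma Mlift_eq_sum_superset:
  assumes "finite S" "Yidx G \<subseteq> S" "\<And>k. k \<in> S \<Longrightarrow> k + max_Pidx G \<le> B"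
  shows "Mlift G = (\<Sum>k\<in>S. \<Sum>m\<le>B. y m * mu_coeff k m (pd (Y k) G))"
proof -
  have "Mlift G = (\<Sum>k\<in>Yidx G. \<Sum>m\<le>B. y m * mu_coeff k m (pd (Y k) G))"
    unfolding Mlift_def
  proof (rule sum.cong[OF refl])
    fix k assume k: "k \<in> Yidx G"
    have "y m * mu_coeff k m (pd (Y k) G) = 0" if "k + max_Pidx G < m" for m
      using that max_Pidx_mono[OF vars_pd, of "Y k" G] by (simp add: mu_coeff_eq_0)
    moreover have "k \<le> Max (insert 0 (Yidx G))" "k + max_Pidx G \<le> B"
      using k assms by auto
    ultimately show "(\<Sum>m\<le>Max (insert 0 (Yidx G)) + max_Pidx G. y m * mu_coeff k m (pd (Y k) G))
        = (\<Sum>m\<le>B. y m * mu_coeff k m (pd (Y k) G))"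
      by (intro sum_atMost_extend[of "k + max_Pidx G"]) auto
  qed
  also have "\<dots> = (\<Sum>k\<in>S. \<Sum>m\<le>B. y m * mu_coeff k m (pd (Y k) G))"
    by (rule sum.mono_neutral_left) (use assms in \<open>auto simp: pd_Y_eq_0_if_notin_Yidx\<close>)
  finally show ?thesis .
qed

lemma Mlift_add: "Mlift (F + G) = Mlift F + Mlift G"
proof -
  let ?S = "Yidx F \<union> Yidx G \<union> Yidx (F + G)"
  let ?B = "Max (insert 0 ?S) + max_Pidx F + max_Pidx G + max_Pidx (F + G)"
  have "k + max_Pidx H \<le> ?B" if "k \<in> ?S" "H \<in> {F, G, F + G}" for k H
  proof -
    have "k \<le> Max (insert 0 ?S)"
      using that(1) by simp
    then show ?thesis
      using that(2) by auto
  qed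
  then have "Mlift H = (\<Sum>k\<in>?S. \<Sum>m\<le>?B. y m * mu_coeff k m (pd (Y k) H))" if "H \<in> {F, G, F + G}" for H
    using that by (intro Mlift_eq_sum_superset) auto
  then show ?thesis
    by (simp add: pd_add mu_coeff_add distrib_left sum.distrib)
qed

lemma Mlift_0 [simp]: "Mlift 0 = 0"
  by (metis Mlift_add add_cancel_right_right)

lemma Mlift_y_mult:
  assumes h: "y_free h" and B: "k + max_Pidx h \<le> B"
  shows "Mlift (y k * h) = (\<Sum>m\<le>B. y m * mu_coeff k m h)"
proof -
  have "Mlift (y k * h) = (\<Sum>k'\<in>{k}. \<Sum>m\<le>B. y m * mu_coeff k' m (pd (Y k') (y k * h)))"
    by (rule Mlift_eq_sum_superset) (use Yidx_y_mult[OF h] max_Pidx_y_mult[of k h] B in auto)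
  then show ?thesis
    by (simp add: pd_Y_y_mult h)
qed

lemma Mlift_y0: "y_free h \<Longrightarrow> Mlift (y 0 * h) = y 0 * Dalpha h"
  by (simp add: Mlift_y_mult[of h 0 "max_Pidx h"] mu_coeff_def sum.atMost_shift binomial_eq_0)

inductive y_linear :: "mpoly \<Rightarrow> bool" where
  y_linear_0: "y_linear 0"
| y_linear_y_mult: "y_free h \<Longrightarrow> y_linear (y k * h)"
| y_linear_add: "y_linear a \<Longrightarrow> y_linear b \<Longrightarrow> y_linear (a + b)"

lemma y_linear_sum: "(\<And>i. i \<in> I \<Longrightarrow> y_linear (f i)) \<Longrightarrow> y_linear (\<Sum>i\<in>I. f i)"
  by (induction I rule: infinite_finite_induct) (auto intro: y_linear.intros)

lemma y_free_lambda_coeff: "y_free h \<Longrightarrow> y_free (lambda_coeff k m h)"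
  by (simp add: lambda_coeff_def y_free_mult y_free_pd)

lemma y_free_mu_coeff: "y_free h \<Longrightarrow> y_free (mu_coeff k m h)"
  by (simp add: mu_coeff_def y_free_mult y_free_pd y_free_add y_free_Dalpha)

lemma max_Pidx_lambda_coeff_le: "max_Pidx (lambda_coeff k m h) \<le> k + max_Pidx h"
  unfolding lambda_coeff_def
  by (auto intro!: max_Pidx_mult_le max_Pidx_p_le max_Pidx_pd_le)

lemma max_Pidx_mu_coeff_le: "max_Pidx (mu_coeff k m h) \<le> k + 2 * max_Pidx h"
  unfolding mu_coeff_def using max_Pidx_Dalpha_le[of h]
  by (auto intro!: max_Pidx_add_le max_Pidx_mult_le max_Pidx_p_le max_Pidx_pd_le)

lemma y_linear_LambdaY: "y_linear G \<Longrightarrow> y_linear (LambdaY G)"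
proof (induction rule: y_linear.induct)
  case (y_linear_y_mult h k)
  then show ?case
    by (simp add: LambdaY_y_mult[OF y_linear_y_mult order.refl] y_linear_sum y_linear.y_linear_y_mult
        y_free_lambda_coeff)
qed (auto simp: LambdaY_add intro: y_linear.intros)

lemma y_linear_LambdaY_power: "y_linear G \<Longrightarrow> y_linear ((LambdaY ^^ n) G)"
  by (induction n) (auto intro: y_linear_LambdaY)

section \<open>Identities between the coefficients\<close>

lemma Dalpha_p_Suc_mult_eq_sum_coeffs:
  "Dalpha (p (k + 1) * h) = (\<Sum>m\<le>k + max_Pidx h. p (m + 1) * (lambda_coeff k m h + mu_coeff k m h))"
proof -
  let ?F = "\<lambda>m. p (m + 1) * (lambda_coeff k m h + mu_coeff k m h)"
  have "(\<Sum>m<k. ?F m) = (\<Sum>m<k. of_nat (m + 1) * (p (m + 1) * p (k + 1 - (m + 1))) * h)"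
    by (rule sum.cong) (auto simp: lambda_coeff_def mu_coeff_def algebra_simps)
  also have "\<dots> = (\<Sum>i\<in>{1..<k + 1}. of_nat i * (p i * p (k + 1 - i)) * h)"
    by (rule sum.reindex_bij_witness[of _ "\<lambda>i. i - 1" "\<lambda>m. m + 1"]) auto
  also have "\<dots> = (\<Sum>i\<in>{1..<k + 1}. of_nat i * (p i * p (k + 1 - i))) * h"
    by (simp only: sum_distrib_right)
  finally have low: "(\<Sum>m<k. ?F m) = (\<Sum>i\<in>{1..<k + 1}. of_nat i * (p i * p (k + 1 - i))) * h" .
  have diag: "?F k = p (k + 1) * Dalpha h + cst (bb * of_nat ((k + 1) choose 2)) * p (k + 1) * h"
    by (simp add: lambda_coeff_def mu_coeff_def Suc_choose_two cst_mult cst_add algebra_simps)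
  have high: "(\<Sum>i\<in>{1..k + max_Pidx h - k}. ?F (i + k))
      = cst (1 + bb) * of_nat (k + 1) * (\<Sum>i\<in>{1..max_Pidx h}. of_nat i * p (i + (k + 1)) * pd (P i) h)"
    by (simp add: sum_distrib_left lambda_coeff_def mu_coeff_def cst_mult cst_add cst_of_nat
        algebra_simps)
  show ?thesis
    unfolding sum_atMost_split3[OF le_add1] low diag high Dalpha_mult_p[of "k + 1", OF le_add2]
    by (simp add: algebra_simps)
qed

lemma mu_lambda_coeff_low:
  "l < k \<Longrightarrow> l < m \<Longrightarrow> mu_coeff l m (lambda_coeff k l h) = lambda_coeff l m (mu_coeff k l h)"
  by (simp add: lambda_coeff_def mu_coeff_def pd_mult pd_vr cst_mult cst_add cst_diff cst_of_nat
      algebra_simps)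

lemma mu_lambda_coeff_high:
  "k < l \<Longrightarrow> m < l \<Longrightarrow> mu_coeff l m (lambda_coeff k l h) = lambda_coeff l m (mu_coeff k l h)
     + cst (1 + bb) * (of_nat m - of_nat k) * of_nat (l - k) * p (l - m) * pd (P (l - k)) h"
  by (simp add: lambda_coeff_def mu_coeff_def cst_mult cst_add cst_diff cst_of_nat algebra_simps)

lemma mu_lambda_coeff_diag: "mu_coeff k k (lambda_coeff k k h) = lambda_coeff k k (mu_coeff k k h)"
  unfolding lambda_coeff_def mu_coeff_def
  by (simp add: Dalpha_add Dalpha_cst_mult) (simp add: algebra_simps flip: cst_mult)

lemma sum_mu_lambda_coeff_diag:
  "(\<Sum>l\<le>B. mu_coeff l k (lambda_coeff k l h)) = (\<Sum>l\<le>B. lambda_coeff l k (mu_coeff k l h))"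
proof (rule sum.cong[OF refl])
  fix l
  consider "l < k" | "l = k" | "k < l"
    by linarith
  then show "mu_coeff l k (lambda_coeff k l h) = lambda_coeff l k (mu_coeff k l h)"
    by cases (simp_all add: mu_lambda_coeff_low mu_lambda_coeff_diag mu_lambda_coeff_high)
qed

lemma sum_mu_lambda_coeff_below_high:
  assumes "m < k" "k + max_Pidx h \<le> B"
  shows "(\<Sum>j\<in>{1..B - k}. lambda_coeff (j + k) m (mu_coeff k (j + k) h))
    = (\<Sum>j\<in>{1..B - k}. mu_coeff (j + k) m (lambda_coeff k (j + k) h))
      + cst (1 + bb) * of_nat (k - m) * (\<Sum>j\<in>{1..max_Pidx h}. of_nat j * p (j + (k - m)) * pd (P j) h)"
proof -
  let ?t = "\<lambda>j. of_nat j * p (j + (k - m)) * pd (P j) h"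
  have "lambda_coeff (j + k) m (mu_coeff k (j + k) h)
      = mu_coeff (j + k) m (lambda_coeff k (j + k) h) + cst (1 + bb) * of_nat (k - m) * ?t j"
    if "1 \<le> j" for j
    using mu_lambda_coeff_high[of k "j + k" m h] that assms(1) by (simp add: of_nat_diff algebra_simps)
  then have "(\<Sum>j\<in>{1..B - k}. lambda_coeff (j + k) m (mu_coeff k (j + k) h))
      = (\<Sum>j\<in>{1..B - k}. mu_coeff (j + k) m (lambda_coeff k (j + k) h))
        + cst (1 + bb) * of_nat (k - m) * (\<Sum>j\<in>{1..B - k}. ?t j)"
    by (simp add: sum.distrib sum_distrib_left)
  also have "(\<Sum>j\<in>{1..B - k}. ?t j) = (\<Sum>j\<in>{1..max_Pidx h}. ?t j)"
    by (rule sum_atLeastAtMost_extend[of "max_Pidx h"])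
      (use assms in \<open>auto simp: pd_P_eq_0_above_max_Pidx\<close>)
  finally show ?thesis .
qed

(* The terms l = m and l = m + c and the ranges between and above them leave exactly the
   commutator of D_alpha with p_c, evaluated by Dalpha_mult_p. *)
lemma sum_mu_lambda_coeff_below:
  assumes "1 \<le> c" "m + c + max_Pidx h \<le> B"
  shows "(\<Sum>l\<le>B. mu_coeff l m (lambda_coeff (m + c) l h))
    = (\<Sum>l\<le>B. lambda_coeff l m (mu_coeff (m + c) l h))"
proof -
  have mid: "(\<Sum>a\<in>{1..<c}. lambda_coeff (a + m) m (mu_coeff (m + c) (a + m) h))
      = (\<Sum>a\<in>{1..<c}. mu_coeff (a + m) m (lambda_coeff (m + c) (a + m) h))
        + (\<Sum>a\<in>{1..<c}. of_nat a * (p a * p (c - a))) * h"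
  proof -
    have "lambda_coeff (a + m) m (mu_coeff (m + c) (a + m) h)
        = mu_coeff (a + m) m (lambda_coeff (m + c) (a + m) h) + of_nat a * (p a * p (c - a)) * h"
      if "a \<in> {1..<c}" for a
      using that by (simp add: lambda_coeff_def mu_coeff_def algebra_simps)
    then show ?thesis
      by (simp add: sum.distrib sum_distrib_right)
  qed
  have high: "(\<Sum>j\<in>{1..B - (m + c)}. lambda_coeff (j + (m + c)) m (mu_coeff (m + c) (j + (m + c)) h))
      = (\<Sum>j\<in>{1..B - (m + c)}. mu_coeff (j + (m + c)) m (lambda_coeff (m + c) (j + (m + c)) h))
        + cst (1 + bb) * of_nat c * (\<Sum>j\<in>{1..max_Pidx h}. of_nat j * p (j + c) * pd (P j) h)"
    using sum_mu_lambda_coeff_below_high[of m "m + c" h B] assms by simp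
  have low: "(\<Sum>l<m. mu_coeff l m (lambda_coeff (m + c) l h))
      = (\<Sum>l<m. lambda_coeff l m (mu_coeff (m + c) l h))"
    by (rule sum.cong) (simp_all add: mu_lambda_coeff_low)
  have lhs_m: "mu_coeff m m (lambda_coeff (m + c) m h)
      = Dalpha (p c * h) + cst (bb * of_nat (m choose 2)) * (p c * h)"
    using assms(1) by (simp add: lambda_coeff_def mu_coeff_def)
  have "m < m + c" "m + c \<le> B"
    using assms by simp_all
  note split = sum_atMost_split5[OF this]
  show ?thesis
    unfolding split[of "\<lambda>l. mu_coeff l m (lambda_coeff (m + c) l h)"]
      split[of "\<lambda>l. lambda_coeff l m (mu_coeff (m + c) l h)"] add_diff_cancel_left' low mid high
      lhs_m Dalpha_mult_p[OF assms(1)]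
    using assms(1)
    by (simp add: lambda_coeff_def mu_coeff_def choose_two_add cst_mult cst_add cst_of_nat algebra_simps)
qed

lemma sum_mu_lambda_coeff_above_middle:
  assumes "1 \<le> c"
  shows "(\<Sum>a\<in>{1..<c}. mu_coeff (a + k) (k + c) (lambda_coeff k (a + k) h))
    = (\<Sum>a\<in>{1..<c}. lambda_coeff (a + k) (k + c) (mu_coeff k (a + k) h))
      + cst ((1 + bb) * (1 + bb)) * (cst (inverse 2)
          * (of_nat c * (\<Sum>a\<in>{1..<c}. of_nat (a * (c - a)) * pd (P a) (pd (P (c - a)) h))))"
proof -
  let ?g = "\<lambda>a. of_nat (a * (c - a)) * pd (P a) (pd (P (c - a)) h)"
  have "mu_coeff (a + k) (k + c) (lambda_coeff k (a + k) h)
      = lambda_coeff (a + k) (k + c) (mu_coeff k (a + k) h)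
        + cst ((1 + bb) * (1 + bb)) * (of_nat a * ?g a)"
    if "a \<in> {1..<c}" for a
  proof -
    have "pd (P (c - a)) (pd (P a) h) = pd (P a) (pd (P (c - a)) h)"
      by (rule pd_commute)
    with that show ?thesis
      unfolding lambda_coeff_def mu_coeff_def
      by (simp add: pd_cst_mult)
        (simp add: cst_mult cst_add cst_diff cst_of_nat cst_numeral algebra_simps)
  qed
  then have "(\<Sum>a\<in>{1..<c}. mu_coeff (a + k) (k + c) (lambda_coeff k (a + k) h))
      = (\<Sum>a\<in>{1..<c}. lambda_coeff (a + k) (k + c) (mu_coeff k (a + k) h)
          + cst ((1 + bb) * (1 + bb)) * (of_nat a * ?g a))"
    by (rule sum.cong[OF refl])
  also have "\<dots> = (\<Sum>a\<in>{1..<c}. lambda_coeff (a + k) (k + c) (mu_coeff k (a + k) h))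
      + cst ((1 + bb) * (1 + bb)) * (\<Sum>a\<in>{1..<c}. of_nat a * ?g a)"
    by (simp only: sum.distrib sum_distrib_left)
  finally have "(\<Sum>a\<in>{1..<c}. mu_coeff (a + k) (k + c) (lambda_coeff k (a + k) h))
      = (\<Sum>a\<in>{1..<c}. lambda_coeff (a + k) (k + c) (mu_coeff k (a + k) h))
        + cst ((1 + bb) * (1 + bb)) * (\<Sum>a\<in>{1..<c}. of_nat a * ?g a)" .
  moreover have "of_nat c * (\<Sum>a\<in>{1..<c}. ?g a) = 2 * (\<Sum>a\<in>{1..<c}. of_nat a * ?g a)"
  proof (rule two_mult_sum_of_nat_mult_symmetric[symmetric])
    fix a assume "a \<in> {1..<c}"
    then have "c - (c - a) = a"
      by simp
    then show "?g (c - a) = ?g a"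
      by (simp add: mult.commute[of "c - a"] pd_commute[of "P (c - a)" "P a"])
  qed
  ultimately show ?thesis
    by (simp only: cst_inverse_2_mult_2)
qed

lemma sum_mu_lambda_coeff_above_high:
  assumes "k + c + max_Pidx h \<le> B"
  shows "(\<Sum>j\<in>{1..B - (k + c)}. mu_coeff (j + (k + c)) (k + c) (lambda_coeff k (j + (k + c)) h))
    = (\<Sum>j\<in>{1..B - (k + c)}. lambda_coeff (j + (k + c)) (k + c) (mu_coeff k (j + (k + c)) h))
      + cst (1 + bb) * of_nat c * (\<Sum>j\<in>{1..max_Pidx h}. of_nat (j + c) * p j * pd (P (j + c)) h)"
proof -
  let ?t = "\<lambda>j. of_nat (j + c) * p j * pd (P (j + c)) h"
  have "mu_coeff (j + (k + c)) (k + c) (lambda_coeff k (j + (k + c)) h)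
      = lambda_coeff (j + (k + c)) (k + c) (mu_coeff k (j + (k + c)) h) + cst (1 + bb) * of_nat c * ?t j"
    if "1 \<le> j" for j
    using that mu_lambda_coeff_high[of k "j + (k + c)" "k + c" h] by (simp add: algebra_simps)
  then have "(\<Sum>j\<in>{1..B - (k + c)}. mu_coeff (j + (k + c)) (k + c) (lambda_coeff k (j + (k + c)) h))
      = (\<Sum>j\<in>{1..B - (k + c)}. lambda_coeff (j + (k + c)) (k + c) (mu_coeff k (j + (k + c)) h))
        + cst (1 + bb) * of_nat c * (\<Sum>j\<in>{1..B - (k + c)}. ?t j)"
    by (simp add: sum.distrib sum_distrib_left)
  also have "(\<Sum>j\<in>{1..B - (k + c)}. ?t j) = (\<Sum>j\<in>{1..max_Pidx h}. ?t j)"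
    by (rule sum_atLeastAtMost_extend[of "max_Pidx h"])
      (use assms in \<open>auto simp: pd_P_eq_0_above_max_Pidx\<close>)
  finally show ?thesis .
qed

(* Now the remaining terms are (1 + b) c times the commutator of d/dp_c with D_alpha,
   evaluated by pd_P_Dalpha, once the middle range is symmetrised under a <-> c - a. *)
lemma sum_mu_lambda_coeff_above:
  assumes "1 \<le> c" "k + c + max_Pidx h \<le> B"
  shows "(\<Sum>l\<le>B. mu_coeff l (k + c) (lambda_coeff k l h))
    = (\<Sum>l\<le>B. lambda_coeff l (k + c) (mu_coeff k l h))"
proof -
  have low: "(\<Sum>l<k. mu_coeff l (k + c) (lambda_coeff k l h))
      = (\<Sum>l<k. lambda_coeff l (k + c) (mu_coeff k l h))"
    by (rule sum.cong) (simp_all add: mu_lambda_coeff_low)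
  have rhs_k: "lambda_coeff k (k + c) (mu_coeff k k h)
      = cst ((1 + bb) * of_nat c) * (pd (P c) (Dalpha h) + cst (bb * of_nat (k choose 2)) * pd (P c) h)"
    using assms(1) by (simp add: lambda_coeff_def mu_coeff_def pd_add pd_cst_mult)
  have lhs_k: "mu_coeff k (k + c) (lambda_coeff k k h)
      = cst ((1 + bb) * of_nat k * of_nat c) * (cst (bb * of_nat k) * pd (P c) h)"
    using assms(1) by (simp add: lambda_coeff_def mu_coeff_def pd_cst_mult)
  have lhs_kc: "mu_coeff (k + c) (k + c) (lambda_coeff k (k + c) h)
      = cst ((1 + bb) * of_nat c)
        * (Dalpha (pd (P c) h) + cst (bb * of_nat ((k + c) choose 2)) * pd (P c) h)"
    using assms(1) unfolding lambda_coeff_def mu_coeff_def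
    by (simp add: Dalpha_cst_mult) (simp add: algebra_simps)
  have "k < k + c" "k + c \<le> B"
    using assms by simp_all
  note split = sum_atMost_split5[OF this]
  show ?thesis
    unfolding split[of "\<lambda>l. mu_coeff l (k + c) (lambda_coeff k l h)"]
      split[of "\<lambda>l. lambda_coeff l (k + c) (mu_coeff k l h)"] add_diff_cancel_left' low
      sum_mu_lambda_coeff_above_middle[OF assms(1)] sum_mu_lambda_coeff_above_high[OF assms(2)]
      lhs_k rhs_k lhs_kc pd_P_Dalpha[OF assms(1)]
    using assms(1)
    by (simp add: lambda_coeff_def mu_coeff_def choose_two_add cst_mult cst_add cst_of_nat cst_numeral
        algebra_simps)
qed

lemma sum_mu_lambda_coeff_commute:
  "(\<Sum>l\<le>k + max_Pidx h. mu_coeff l m (lambda_coeff k l h))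
    = (\<Sum>l\<le>k + max_Pidx h. lambda_coeff l m (mu_coeff k l h))"
proof -
  define B where "B = k + max_Pidx h + m"
  have "(\<Sum>l\<le>k + max_Pidx h. mu_coeff l m (lambda_coeff k l h))
      = (\<Sum>l\<le>B. mu_coeff l m (lambda_coeff k l h))"
    by (rule sum_atMost_extend[of "k + max_Pidx h"]) (auto simp: B_def lambda_coeff_eq_0)
  moreover have "(\<Sum>l\<le>k + max_Pidx h. lambda_coeff l m (mu_coeff k l h))
      = (\<Sum>l\<le>B. lambda_coeff l m (mu_coeff k l h))"
    by (rule sum_atMost_extend[of "k + max_Pidx h"]) (auto simp: B_def mu_coeff_eq_0)
  moreover consider "m = k" | "m < k" | "k < m"
    by linarith
  then have "(\<Sum>l\<le>B. mu_coeff l m (lambda_coeff k l h)) = (\<Sum>l\<le>B. lambda_coeff l m (mu_coeff k l h))"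
  proof cases
    case 1
    then show ?thesis
      by (simp add: sum_mu_lambda_coeff_diag)
  next
    case 2
    with sum_mu_lambda_coeff_below[of "k - m" m h B] show ?thesis
      by (simp add: B_def)
  next
    case 3
    with sum_mu_lambda_coeff_above[of "m - k" k h B] show ?thesis
      by (simp add: B_def)
  qed
  ultimately show ?thesis
    by simp
qed

section \<open>The three identities and the theorem\<close>

lemma additive_sum_y_mult:
  assumes add: "\<And>a b. T (a + b) = T a + T b" "T 0 = 0"
    and y_mult: "\<And>l g B. y_free g \<Longrightarrow> l + max_Pidx g \<le> B \<Longrightarrow> T (y l * g) = (\<Sum>m\<le>B. y m * C l m g)"
    and g: "\<And>l. y_free (g l)" "\<And>l. l \<le> K \<Longrightarrow> l + max_Pidx (g l) \<le> B"
  shows "T (\<Sum>l\<le>K. y l * g l) = (\<Sum>m\<le>B. y m * (\<Sum>l\<le>K. C l m (g l)))"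
proof -
  have "T (\<Sum>l\<le>K. y l * g l) = (\<Sum>l\<le>K. T (y l * g l))"
    by (induction K) (simp_all add: add)
  also have "\<dots> = (\<Sum>l\<le>K. \<Sum>m\<le>B. y m * C l m (g l))"
    by (rule sum.cong[OF refl]) (simp add: y_mult g)
  also have "\<dots> = (\<Sum>m\<le>B. y m * (\<Sum>l\<le>K. C l m (g l)))"
    by (subst sum.swap) (simp add: sum_distrib_left)
  finally show ?thesis .
qed

lemma Mlift_LambdaY_y_mult:
  assumes h: "y_free h"
  shows "Mlift (LambdaY (y k * h)) = LambdaY (Mlift (y k * h))"
proof -
  define K where "K = k + max_Pidx h"
  define B where "B = 3 * K"
  have "Mlift (LambdaY (y k * h)) = Mlift (\<Sum>l\<le>K. y l * lambda_coeff k l h)"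
    unfolding K_def by (simp only: LambdaY_y_mult[OF h order.refl])
  also have "\<dots> = (\<Sum>m\<le>B. y m * (\<Sum>l\<le>K. mu_coeff l m (lambda_coeff k l h)))"
  proof (rule additive_sum_y_mult[where C = mu_coeff])
    show "l + max_Pidx (lambda_coeff k l h) \<le> B" if "l \<le> K" for l
      using that max_Pidx_lambda_coeff_le[of k l h] by (simp add: B_def K_def)
  qed (auto simp: Mlift_add Mlift_y_mult y_free_lambda_coeff h)
  also have "\<dots> = (\<Sum>m\<le>B. y m * (\<Sum>l\<le>K. lambda_coeff l m (mu_coeff k l h)))"
    unfolding K_def by (simp only: sum_mu_lambda_coeff_commute)
  also have "\<dots> = LambdaY (\<Sum>l\<le>K. y l * mu_coeff k l h)"
  proof (rule additive_sum_y_mult[where C = lambda_coeff, symmetric])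
    show "l + max_Pidx (mu_coeff k l h) \<le> B" if "l \<le> K" for l
      using that max_Pidx_mu_coeff_le[of k l h] by (simp add: B_def K_def)
  qed (auto simp: LambdaY_add LambdaY_y_mult y_free_mu_coeff h)
  also have "\<dots> = LambdaY (Mlift (y k * h))"
    unfolding K_def by (simp only: Mlift_y_mult[OF h order.refl])
  finally show ?thesis .
qed

lemma Mlift_LambdaY_commute: "y_linear G \<Longrightarrow> Mlift (LambdaY G) = LambdaY (Mlift G)"
  by (induction rule: y_linear.induct) (auto simp: Mlift_LambdaY_y_mult LambdaY_add Mlift_add)

lemma Mlift_LambdaY_power_commute: "y_linear G \<Longrightarrow> Mlift ((LambdaY ^^ n) G) = (LambdaY ^^ n) (Mlift G)"
  by (induction n) (simp_all add: Mlift_LambdaY_commute y_linear_LambdaY_power)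

lemma ThetaY_Yplus_LambdaY_y_mult_plus_Mlift:
  assumes h: "y_free h"
  shows "ThetaY (Yplus (LambdaY (y k * h))) + ThetaY (Yplus (Mlift (y k * h)))
    = Dalpha (ThetaY (Yplus (y k * h)))"
proof -
  let ?K = "k + max_Pidx h"
  have "ThetaY (Yplus (LambdaY (y k * h))) + ThetaY (Yplus (Mlift (y k * h)))
      = (\<Sum>m\<le>?K. p (m + 1) * lambda_coeff k m h) + (\<Sum>m\<le>?K. p (m + 1) * mu_coeff k m h)"
    by (simp add: LambdaY_y_mult[OF h order.refl] Mlift_y_mult[OF h order.refl] Yplus_sum ThetaY_sum
        ThetaY_Yplus_y_mult y_free_lambda_coeff y_free_mu_coeff h)
  also have "\<dots> = (\<Sum>m\<le>?K. p (m + 1) * (lambda_coeff k m h + mu_coeff k m h))"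
    by (simp only: sum.distrib distrib_left)
  also have "\<dots> = Dalpha (p (k + 1) * h)"
    by (rule Dalpha_p_Suc_mult_eq_sum_coeffs[symmetric])
  finally show ?thesis
    by (simp add: ThetaY_Yplus_y_mult h)
qed

lemma ThetaY_Yplus_LambdaY_plus_Mlift:
  "y_linear G \<Longrightarrow> ThetaY (Yplus (LambdaY G)) + ThetaY (Yplus (Mlift G)) = Dalpha (ThetaY (Yplus G))"
proof (induction rule: y_linear.induct)
  case (y_linear_add a b)
  then show ?case
    by (simp add: LambdaY_add Mlift_add Yplus_add ThetaY_add Dalpha_add algebra_simps)
qed (simp_all add: ThetaY_Yplus_LambdaY_y_mult_plus_Mlift)

lemma Aop_eq_ThetaY_Yplus:
  "Aop j f = ThetaY (Yplus ((LambdaY ^^ (j - 1)) (y 0 * (cst (inverse (1 + bb)) * f))))"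
  by (simp add: Aop_def mult_ac)

lemma Aop_Dalpha_eq_Mlift:
  assumes "y_free f"
  shows "Aop j (Dalpha f)
    = ThetaY (Yplus (Mlift ((LambdaY ^^ (j - 1)) (y 0 * (cst (inverse (1 + bb)) * f)))))"
proof -
  have h: "y_free (cst (inverse (1 + bb)) * f)"
    using assms by (simp add: y_free_mult)
  have "y 0 * (cst (inverse (1 + bb)) * Dalpha f) = Mlift (y 0 * (cst (inverse (1 + bb)) * f))"
    by (simp add: Mlift_y0[OF h] Dalpha_cst_mult)
  then show ?thesis
    by (simp add: Aop_eq_ThetaY_Yplus Mlift_LambdaY_power_commute y_linear_y_mult[OF h])
qed

theorem theorem4p9:
  shows "(\<forall>f. inP f \<longrightarrow> Aop 1 f = cst (inverse (1 + bb)) * vr (P 1) * f)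
       \<and> (\<forall>j\<ge>1. \<forall>f. inP f \<longrightarrow> Aop (j+1) f = Dalpha (Aop j f) - Aop j (Dalpha f))"
proof (intro conjI allI impI)
  fix f assume "inP f"
  then have h: "y_free (cst (inverse (1 + bb)) * f)"
    by (simp add: inP_imp_y_free y_free_mult)
  show "Aop 1 f = cst (inverse (1 + bb)) * vr (P 1) * f"
    using ThetaY_Yplus_y_mult[OF h, of 0] by (simp add: Aop_eq_ThetaY_Yplus mult_ac)
next
  fix j :: nat and f assume j: "1 \<le> j" and "inP f"
  then have h: "y_free (cst (inverse (1 + bb)) * f)"
    by (simp add: inP_imp_y_free y_free_mult)
  define G where "G = (LambdaY ^^ (j - 1)) (y 0 * (cst (inverse (1 + bb)) * f))"
  have "y_linear G"
    unfolding G_def by (rule y_linear_LambdaY_power) (rule y_linear_y_mult[OF h])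
  moreover have "Aop (j + 1) f = ThetaY (Yplus (LambdaY G))"
    using j by (cases j) (simp_all add: Aop_eq_ThetaY_Yplus G_def)
  ultimately show "Aop (j + 1) f = Dalpha (Aop j f) - Aop j (Dalpha f)"
    using ThetaY_Yplus_LambdaY_plus_Mlift Aop_Dalpha_eq_Mlift[OF inP_imp_y_free[OF \<open>inP f\<close>]]
    by (simp add: Aop_eq_ThetaY_Yplus G_def algebra_simps)
qed

end
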